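(* In the 1SDI setting where Alice measures $A_0=\sigma_x$, $A_1=\sigma_y$, Bob measures $B_0=\sigma_x$, $B_1=\sigma_y$, and Charlie is a black box, the Mermin family $P^V_{MF}$ ($0<V\le1$) demonstrates tripartite steering if and only if $V>\frac1{\sqrt2}$.
   Context: Outcomes and settings: $a,b,c,x,y,z\in\{0,1\}$. For a qubit observable $O$ with eigenvalues $\pm1$, the measurement has projectors $M_0=(\mathbb 1+O)/2$, $M_1=(\mathbb 1-O)/2$; $M^A_{a|x}$, $M^B_{b|y}$ denote the projectors of $A_x$, $B_y$. Mermin family: $P^V_{MF}(abc|xyz)=\frac{1+(-1)^{a\oplus b\oplus c\oplus xy\oplus yz\oplus xz}\,\delta_{x\oplus y\oplus1,z}\,V}{8}$. 1SDI fully LHS-LHV model: $P(abc|xyz)=\sum_\lambda q_\lambda \mathrm{Tr}(M^A_{a|x}\rho^\lambda_A)\mathrm{Tr}(M^B_{b|y}\rho^\lambda_B)P_\lambda(c|z)$ with probabilities $q_\lambda$, qubit states $\rho^\lambda_A,\rho^\lambda_B$ and arbitrary conditional distributions $P_\lambda(c|z)$. Tripartite steering in the 1SDI scenario: $P$ demonstrates tripartite steering iff (i) it admits no 1SDI fully LHS-LHV model, and (ii) there is no finite $d$, state $\rho^{ABC}=\sum_\lambda r_\lambda\rho^\lambda_{AB}\otimes\rho^\lambda_C$ on $\mathbb C^2\otimes\mathbb C^2\otimes\mathbb C^d$ (separable across $AB|C$) and POVMs $\{N_{c|z}\}_c$ on $\mathbb C^d$ with $P(abc|xyz)=\mathrm{Tr}[(M^A_{a|x}\otimes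 M^B_{b|y}\otimes N_{c|z})\rho^{ABC}]$. *)

theory Defs
  imports Complex_Main "Jordan_Normal_Form.Matrix"
begin

definition mtrace :: "complex mat \<Rightarrow> complex" where
  "mtrace A = (\<Sum>i<dim_row A. A $$ (i, i))"

text \<open>Positive semidefinite n x n complex matrix: v^* A v is real and nonnegative
  for every v in C^n (this also forces A to be Hermitian).\<close>
definition psd :: "nat \<Rightarrow> complex mat \<Rightarrow> bool" where
  "psd n A \<longleftrightarrow> A \<in> carrier_mat n n \<and>
     (\<forall>v \<in> carrier_vec n. Im (conjugate v \<bullet> (A *\<^sub>v v)) = 0 \<and>
                           Re (conjugate v \<bullet> (A *\<^sub>v v)) \<ge> 0)"

definition density :: "nat \<Rightarrow> complex mat \<Rightarrow> bool" where
  "density n \<rho> \<longleftrightarrow> psd n \<rho> \<and> mtrace \<rho> = 1"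

definition kron :: "complex mat \<Rightarrow> complex mat \<Rightarrow> complex mat" where
  "kron A B = mat (dim_row A * dim_row B) (dim_col A * dim_col B)
     (\<lambda>(i, j). A $$ (i div dim_row B, j div dim_col B) * B $$ (i mod dim_row B, j mod dim_col B))"

definition msum :: "nat \<Rightarrow> nat \<Rightarrow> (nat \<Rightarrow> complex mat) \<Rightarrow> complex mat" where
  "msum n k f = mat k k (\<lambda>(i, j). \<Sum>l<n. f l $$ (i, j))"

definition sigma_x :: "complex mat" where
  "sigma_x = mat_of_rows_list 2 [[0, 1], [1, 0]]"

definition sigma_y :: "complex mat" where
  "sigma_y = mat_of_rows_list 2 [[0, - \<i>], [\<i>, 0]]"

definition proj :: "complex mat \<Rightarrow> nat \<Rightarrow> complex mat" where
  "proj Obs a = (1/2 :: complex) \<cdot>\<^sub>m (1\<^sub>m 2 + ((-1) ^ a) \<cdot>\<^sub>m Obs)"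

definition obs :: "nat \<Rightarrow> complex mat" where
  "obs x = (if x = 0 then sigma_x else sigma_y)"

definition MA :: "nat \<Rightarrow> nat \<Rightarrow> complex mat" where
  "MA a x = proj (obs x) a"

definition MB :: "nat \<Rightarrow> nat \<Rightarrow> complex mat" where
  "MB b y = proj (obs y) b"

definition mermin :: "real \<Rightarrow> nat \<Rightarrow> nat \<Rightarrow> nat \<Rightarrow> nat \<Rightarrow> nat \<Rightarrow> nat \<Rightarrow> real" where
  "mermin V a b c x y z =
     (1 + (-1) ^ ((a + b + c + x*y + y*z + x*z) mod 2)
          * (if (x + y + 1) mod 2 = z then 1 else 0) * V) / 8"

text \<open>A behaviour P a b c x y z (outcomes and settings in {0,1}).\<close>
type_synonym behaviour = "nat \<Rightarrow> nat \<Rightarrow> nat \<Rightarrow> nat \<Rightarrow> nat \<Rightarrow> nat \<Rightarrow> real"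

abbreviation bit :: "nat set" where "bit \<equiv> {0, 1}"

definition fully_LHS_LHV :: "behaviour \<Rightarrow> bool" where
  "fully_LHS_LHV P \<longleftrightarrow>
    (\<exists>(n::nat) (q::nat \<Rightarrow> real) (\<rho>A::nat \<Rightarrow> complex mat) (\<rho>B::nat \<Rightarrow> complex mat)
        (Pc::nat \<Rightarrow> nat \<Rightarrow> nat \<Rightarrow> real).
       (\<forall>l<n. q l \<ge> 0) \<and> (\<Sum>l<n. q l) = 1 \<and>
       (\<forall>l<n. density 2 (\<rho>A l) \<and> density 2 (\<rho>B l)) \<and>
       (\<forall>l<n. \<forall>z\<in>bit. Pc l 0 z \<ge> 0 \<and> Pc l 1 z \<ge> 0 \<and> Pc l 0 z + Pc l 1 z = 1) \<and>
       (\<forall>a\<in>bit. \<forall>b\<in>bit. \<forall>c\<in>bit. \<forall>x\<in>bit. \<forall>y\<in>bit. \<forall>z\<in>bit.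
          complex_of_real (P a b c x y z) =
            (\<Sum>l<n. complex_of_real (q l) * mtrace (MA a x * \<rho>A l)
                     * mtrace (MB b y * \<rho>B l) * complex_of_real (Pc l c z))))"

definition AB_C_separable_model :: "behaviour \<Rightarrow> bool" where
  "AB_C_separable_model P \<longleftrightarrow>
    (\<exists>(d::nat) (n::nat) (r::nat \<Rightarrow> real) (\<rho>AB::nat \<Rightarrow> complex mat) (\<rho>C::nat \<Rightarrow> complex mat)
        (N::nat \<Rightarrow> nat \<Rightarrow> complex mat).
       (\<forall>l<n. r l \<ge> 0) \<and> (\<Sum>l<n. r l) = 1 \<and>
       (\<forall>l<n. density 4 (\<rho>AB l) \<and> density d (\<rho>C l)) \<and>
       (\<forall>z\<in>bit. psd d (N 0 z) \<and> psd d (N 1 z) \<and> N 0 z + N 1 z = 1\<^sub>m d) \<and>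
       (let \<rho> = msum n (4 * d) (\<lambda>l. complex_of_real (r l) \<cdot>\<^sub>m kron (\<rho>AB l) (\<rho>C l)) in
        \<forall>a\<in>bit. \<forall>b\<in>bit. \<forall>c\<in>bit. \<forall>x\<in>bit. \<forall>y\<in>bit. \<forall>z\<in>bit.
          complex_of_real (P a b c x y z) =
            mtrace (kron (kron (MA a x) (MB b y)) (N c z) * \<rho>)))"

definition tripartite_steering :: "behaviour \<Rightarrow> bool" where
  "tripartite_steering P \<longleftrightarrow> \<not> fully_LHS_LHV P \<and> \<not> AB_C_separable_model P"

end

(* The Mermin functional M(P) = <A0 B0 C1> + <A0 B1 C0> + <A1 B0 C0> - <A1 B1 C1> equals 4 V on
   the Mermin family.  In a model where Charlie is separated from AB (in particular in a fully
   LHS-LHV model), M is an average over hidden variables of g1 (E00 - E11) + g0 (E01 + E10),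
   where g_z in [-1, 1] are Charlie's real outcome biases and E_xy the AB correlators.  For the
   Pauli measurements this combination only sees the coherence rho_03 of the AB state, and
   positivity gives |rho_03| <= (rho_00 + rho_33) / 2 <= 1/2, whence M <= 2 sqrt 2.  Conversely,
   for V <= 1/sqrt 2 Charlie's two answers are uniformly random classical bits s_0, s_1, and
   conditioned on them AB share an X-shaped state with coherence V ((-1)^s_1 + i (-1)^s_0) / 2.
   Positivity of Tr (N rho), behind the bound on Charlie's biases, is proved by induction on the
   dimension via Schur complements. *)

theory Submission
  imports Defs
begin

section \<open>Traces of Kronecker products\<close>

lemma sum_lessThan_mult:
  fixes f :: "nat \<Rightarrow> 'a::comm_monoid_add"
  shows "(\<Sum>i<m * d. f i) = (\<Sum>p<m. \<Sum>q<d. f (p * d + q))"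
proof -
  have "(\<Sum>i<m * d. f i) = (\<Sum>p<m. \<Sum>i\<in>{p * d..<p * d + d}. f i)"
    by (rule sum.nat_group[symmetric])
  also have "\<dots> = (\<Sum>p<m. \<Sum>q<d. f (p * d + q))"
    by (simp add: sum.atLeastLessThan_shift_0 atLeast0LessThan)
  finally show ?thesis .
qed

lemma mtrace_mult:
  assumes "A \<in> carrier_mat n n" "B \<in> carrier_mat n n"
  shows "mtrace (A * B) = (\<Sum>i<n. \<Sum>j<n. A $$ (i, j) * B $$ (j, i))"
  using assms unfolding mtrace_def
  by (auto simp: scalar_prod_def atLeast0LessThan intro!: sum.cong)

lemma mtrace_add_mult:
  assumes "A \<in> carrier_mat n n" "B \<in> carrier_mat n n" "C \<in> carrier_mat n n"
  shows "mtrace ((A + B) * C) = mtrace (A * C) + mtrace (B * C)"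
proof -
  have AB: "A + B \<in> carrier_mat n n" using assms by simp
  show ?thesis
    unfolding mtrace_mult[OF assms(1,3)] mtrace_mult[OF assms(2,3)] mtrace_mult[OF AB assms(3)]
      sum.distrib[symmetric]
    using assms by (intro sum.cong refl) (simp add: ring_distribs)
qed

lemma kron_carrier:
  assumes "A \<in> carrier_mat m m" "B \<in> carrier_mat d d"
  shows "kron A B \<in> carrier_mat (m * d) (m * d)"
  using assms by (auto simp: kron_def)

lemma kron_index:
  assumes "A \<in> carrier_mat m m" "B \<in> carrier_mat d d" "i < m * d" "j < m * d"
  shows "kron A B $$ (i, j) = A $$ (i div d, j div d) * B $$ (i mod d, j mod d)"
  using assms by (auto simp: kron_def)

lemma mtrace_kron_mult_msum:
  assumes K: "K \<in> carrier_mat m m" and N: "N \<in> carrier_mat d d"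
    and R: "\<And>l. l < n \<Longrightarrow> R l \<in> carrier_mat m m"
    and C: "\<And>l. l < n \<Longrightarrow> C l \<in> carrier_mat d d"
  shows "mtrace (kron K N * msum n (m * d) (\<lambda>l. c l \<cdot>\<^sub>m kron (R l) (C l)))
       = (\<Sum>l<n. c l * mtrace (K * R l) * mtrace (N * C l))"
proof -
  let ?M = "msum n (m * d) (\<lambda>l. c l \<cdot>\<^sub>m kron (R l) (C l))"
  have M: "?M \<in> carrier_mat (m * d) (m * d)" by (simp add: msum_def)
  have M_index: "?M $$ (j, i) = (\<Sum>l<n. c l * (R l $$ (j div d, i div d) * C l $$ (j mod d, i mod d)))"
    if "i < m * d" "j < m * d" for i j
  proof -
    have "(c l \<cdot>\<^sub>m kron (R l) (C l)) $$ (j, i)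
        = c l * (R l $$ (j div d, i div d) * C l $$ (j mod d, i mod d))" if "l < n" for l
      using that \<open>i < m * d\<close> \<open>j < m * d\<close> R[OF that] C[OF that] by (simp add: kron_def)
    then show ?thesis using that by (simp add: msum_def)
  qed
  have "mtrace (kron K N * ?M) = (\<Sum>i<m * d. \<Sum>j<m * d. kron K N $$ (i, j) * ?M $$ (j, i))"
    by (rule mtrace_mult[OF kron_carrier[OF K N] M])
  also have "\<dots> = (\<Sum>i<m * d. \<Sum>j<m * d. K $$ (i div d, j div d) * N $$ (i mod d, j mod d) *
        (\<Sum>l<n. c l * (R l $$ (j div d, i div d) * C l $$ (j mod d, i mod d))))"
    by (intro sum.cong refl) (simp add: kron_index[OF K N] M_index)
  also have "\<dots> = (\<Sum>p<m. \<Sum>q<d. \<Sum>p'<m. \<Sum>q'<d. K $$ (p, p') * N $$ (q, q') *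
        (\<Sum>l<n. c l * (R l $$ (p', p) * C l $$ (q', q))))"
    unfolding sum_lessThan_mult by (intro sum.cong refl) (simp add: sum_lessThan_mult)
  also have "\<dots> = (\<Sum>l<n. \<Sum>p<m. \<Sum>q<d. \<Sum>p'<m. \<Sum>q'<d.
        c l * (K $$ (p, p') * R l $$ (p', p)) * (N $$ (q, q') * C l $$ (q', q)))"
    by (simp add: sum_distrib_left sum.swap[of _ "{..<n}"] algebra_simps)
  also have "\<dots> = (\<Sum>l<n. c l * mtrace (K * R l) * mtrace (N * C l))"
    using R C
    by (intro sum.cong refl)
      (simp add: mtrace_mult[OF K] mtrace_mult[OF N] sum_distrib_left sum_distrib_right
        sum.swap[of _ "{..<d}" "{..<m}"] algebra_simps)
  finally show ?thesis .
qed

section \<open>Positive semidefinite forms\<close>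

(* Matrices as entry functions, so that the dimension can be lowered in the induction below. *)
definition quad_form :: "nat \<Rightarrow> (nat \<Rightarrow> nat \<Rightarrow> complex) \<Rightarrow> (nat \<Rightarrow> complex) \<Rightarrow> complex" where
  "quad_form n A v = (\<Sum>i<n. \<Sum>j<n. cnj (v i) * A i j * v j)"

definition psd_fun :: "nat \<Rightarrow> (nat \<Rightarrow> nat \<Rightarrow> complex) \<Rightarrow> bool" where
  "psd_fun n A \<longleftrightarrow> (\<forall>v. Im (quad_form n A v) = 0 \<and> Re (quad_form n A v) \<ge> 0)"

definition trace_prod :: "nat \<Rightarrow> (nat \<Rightarrow> nat \<Rightarrow> complex) \<Rightarrow> (nat \<Rightarrow> nat \<Rightarrow> complex) \<Rightarrow> complex" where
  "trace_prod n A B = (\<Sum>i<n. \<Sum>j<n. A i j * B j i)"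

lemma if_zero_mult:
  "(if P then a else 0) * b = (if P then a * b else (0::complex))"
  "b * (if P then a else 0) = (if P then b * a else 0)"
  "cnj (if P then a else 0) = (if P then cnj a else 0)"
  by auto

lemma cnj_mult_of_real_mult: "cnj z * complex_of_real r * z = complex_of_real (r * (cmod z)\<^sup>2)"
proof -
  have "cnj z * z = complex_of_real ((cmod z)\<^sup>2)"
    using complex_norm_square[of z, symmetric] by (simp only: mult.commute)
  then show ?thesis by (simp add: algebra_simps)
qed

lemma quad_form_cong:
  "(\<And>i. i < n \<Longrightarrow> v i = w i) \<Longrightarrow> (\<And>i j. i < n \<Longrightarrow> j < n \<Longrightarrow> A i j = A' i j)
   \<Longrightarrow> quad_form n A v = quad_form n A' w"
  unfolding quad_form_def by (intro sum.cong refl) auto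

lemma psd_fun_cong:
  "(\<And>i j. i < n \<Longrightarrow> j < n \<Longrightarrow> A i j = B i j) \<Longrightarrow> psd_fun n A \<Longrightarrow> psd_fun n B"
  unfolding psd_fun_def using quad_form_cong[of n _ _ A B] by metis

lemma conjugate_scalar_prod_mult_mat_vec:
  assumes "M \<in> carrier_mat n n" "w \<in> carrier_vec n"
  shows "conjugate w \<bullet> (M *\<^sub>v w) = quad_form n (\<lambda>i j. M $$ (i, j)) (\<lambda>i. w $ i)"
  using assms unfolding quad_form_def
  by (auto simp: scalar_prod_def atLeast0LessThan sum_distrib_left mult.assoc intro!: sum.cong)

lemma psd_iff_psd_fun: "psd n M \<longleftrightarrow> M \<in> carrier_mat n n \<and> psd_fun n (\<lambda>i j. M $$ (i, j))"
proof
  assume psd: "psd n M"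
  then have M: "M \<in> carrier_mat n n" by (simp add: psd_def)
  have "Im (quad_form n (\<lambda>i j. M $$ (i, j)) v) = 0 \<and> Re (quad_form n (\<lambda>i j. M $$ (i, j)) v) \<ge> 0" for v
  proof -
    have "quad_form n (\<lambda>i j. M $$ (i, j)) v = conjugate (vec n v) \<bullet> (M *\<^sub>v vec n v)"
      by (simp add: conjugate_scalar_prod_mult_mat_vec[OF M] cong: quad_form_cong)
    then show ?thesis using psd by (simp add: psd_def)
  qed
  with M show "M \<in> carrier_mat n n \<and> psd_fun n (\<lambda>i j. M $$ (i, j))" by (simp add: psd_fun_def)
next
  assume "M \<in> carrier_mat n n \<and> psd_fun n (\<lambda>i j. M $$ (i, j))"
  then show "psd n M"
    by (auto simp: psd_def psd_fun_def conjugate_scalar_prod_mult_mat_vec)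
qed

lemma quad_form_two:
  assumes "i < n" "j < n" "i \<noteq> j"
  shows "quad_form n A (\<lambda>k. if k = i then x else if k = j then y else 0) =
     cnj x * A i i * x + cnj x * A i j * y + cnj y * A j i * x + cnj y * A j j * y"
proof -
  have v: "(\<lambda>k. if k = i then x else if k = j then y else 0) =
        (\<lambda>k. (if k = i then x else 0) + (if k = j then y else 0))" using assms(3) by auto
  show ?thesis
    using assms unfolding v quad_form_def by (simp add: ring_distribs sum.distrib if_zero_mult)
qed

lemma psd_fun_diag:
  assumes "psd_fun n A" "i < n" shows "Im (A i i) = 0" "Re (A i i) \<ge> 0"
proof -
  have "quad_form n A (\<lambda>k. if k = i then 1 else 0) = A i i"
    using assms(2) unfolding quad_form_def by (simp add: if_zero_mult)
  then show "Im (A i i) = 0" "Re (A i i) \<ge> 0" using assms(1) unfolding psd_fun_def by metis+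
qed

lemma psd_fun_hermitian:
  assumes "psd_fun n A" "i < n" "j < n" shows "A j i = cnj (A i j)"
proof (cases "i = j")
  case True then show ?thesis using psd_fun_diag[OF assms(1,2)] by (simp add: complex_eq_iff)
next
  case False
  have diag: "Im (A i i) = 0" "Im (A j j) = 0" using psd_fun_diag assms by auto
  have "Im (quad_form n A (\<lambda>k. if k = i then 1 else if k = j then 1 else 0)) = 0"
    "Im (quad_form n A (\<lambda>k. if k = i then 1 else if k = j then \<i> else 0)) = 0"
    using assms(1) unfolding psd_fun_def by blast+
  then have "Im (A i j) + Im (A j i) = 0" "Re (A i j) - Re (A j i) = 0"
    using quad_form_two[OF assms(2,3) False, of A] diag by simp_all
  then show ?thesis by (simp add: complex_eq_iff)
qed

lemma psd_fun_cross_bound: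
  assumes A: "psd_fun n A" and ij: "i < n" "j < n" "i \<noteq> j"
  shows "Re (w * A i j + cnj w * A j i) \<le> cmod w * (Re (A i i) + Re (A j j))"
proof (cases "w = 0")
  case True then show ?thesis using psd_fun_diag[OF A ij(1)] psd_fun_diag[OF A ij(2)] by simp
next
  case False
  let ?c = "complex_of_real (cmod w)"
  have ww: "cnj w * w = complex_of_real ((cmod w)\<^sup>2)"
    using complex_norm_square[of w] by (simp add: mult.commute)
  have "quad_form n A (\<lambda>k. if k = i then ?c else if k = j then - w else 0) =
     ?c * A i i * ?c + ?c * A i j * (- w) + cnj (- w) * A j i * ?c + cnj (- w) * A j j * (- w)"
    using quad_form_two[OF ij] by simp
  also have "\<dots> = complex_of_real ((cmod w)\<^sup>2) * A i i + (cnj w * w) * A j j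
      - ?c * (w * A i j + cnj w * A j i)"
    by (simp add: algebra_simps power2_eq_square)
  also have "\<dots> = complex_of_real ((cmod w)\<^sup>2) * (A i i + A j j) - ?c * (w * A i j + cnj w * A j i)"
    unfolding ww by (simp add: algebra_simps)
  finally have q: "quad_form n A (\<lambda>k. if k = i then ?c else if k = j then - w else 0)
      = complex_of_real ((cmod w)\<^sup>2) * (A i i + A j j) - ?c * (w * A i j + cnj w * A j i)" .
  have "Re (quad_form n A (\<lambda>k. if k = i then ?c else if k = j then - w else 0)) \<ge> 0"
    using A unfolding psd_fun_def by blast
  then have "0 \<le> (cmod w)\<^sup>2 * (Re (A i i) + Re (A j j)) - cmod w * Re (w * A i j + cnj w * A j i)"
    unfolding q by simp
  then have "0 \<le> cmod w * (cmod w * (Re (A i i) + Re (A j j)) - Re (w * A i j + cnj w * A j i))"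
    by (simp add: algebra_simps power2_eq_square)
  with False show ?thesis by (simp add: zero_le_mult_iff)
qed

lemma psd_fun_offdiag_le_half:
  assumes A: "psd_fun 2 A" and tr: "Re (A 0 0) + Re (A 1 1) = 1"
  shows "cmod (A 0 1) \<le> 1/2"
proof -
  have "A 1 0 = cnj (A 0 1)" using psd_fun_hermitian[OF A, of 0 1] by simp
  then have "Re (cnj (A 0 1) * A 0 1 + cnj (cnj (A 0 1)) * A 1 0)
      = 2 * ((Re (A 0 1))\<^sup>2 + (Im (A 0 1))\<^sup>2)"
    by (simp add: power2_eq_square)
  then have "Re (cnj (A 0 1) * A 0 1 + cnj (cnj (A 0 1)) * A 1 0) = 2 * (cmod (A 0 1))\<^sup>2"
    by (simp add: cmod_power2)
  moreover have "Re (cnj (A 0 1) * A 0 1 + cnj (cnj (A 0 1)) * A 1 0) \<le> cmod (A 0 1)"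
    using psd_fun_cross_bound[OF A, of 0 1 "cnj (A 0 1)"] tr by simp
  ultimately show ?thesis by (cases "A 0 1 = 0") (simp_all add: power2_eq_square)
qed

lemma psd_fun_diagonal:
  assumes "\<And>i. i < n \<Longrightarrow> f i \<ge> 0"
  shows "psd_fun n (\<lambda>i j. if i = j then complex_of_real (f i) else 0)"
  unfolding psd_fun_def
proof
  fix v :: "nat \<Rightarrow> complex"
  have "quad_form n (\<lambda>i j. if i = j then complex_of_real (f i) else 0) v
      = (\<Sum>i<n. cnj (v i) * complex_of_real (f i) * v i)"
    unfolding quad_form_def by (simp add: if_zero_mult)
  also have "\<dots> = complex_of_real (\<Sum>i<n. f i * (cmod (v i))\<^sup>2)" by (simp add: cnj_mult_of_real_mult)
  finally have "quad_form n (\<lambda>i j. if i = j then complex_of_real (f i) else 0) v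
      = complex_of_real (\<Sum>i<n. f i * (cmod (v i))\<^sup>2)" .
  moreover have "(\<Sum>i<n. f i * (cmod (v i))\<^sup>2) \<ge> 0" using assms by (intro sum_nonneg) auto
  ultimately show "Im (quad_form n (\<lambda>i j. if i = j then complex_of_real (f i) else 0) v) = 0 \<and>
     0 \<le> Re (quad_form n (\<lambda>i j. if i = j then complex_of_real (f i) else 0) v)" by simp
qed

lemma quad_form_Suc:
  "quad_form (Suc n) A v = quad_form n A v + (\<Sum>i<n. cnj (v i) * A i n * v n)
     + (\<Sum>j<n. cnj (v n) * A n j * v j) + cnj (v n) * A n n * v n"
  unfolding quad_form_def by (simp add: sum.distrib add.assoc)

lemma trace_prod_Suc:
  "trace_prod (Suc n) A B = trace_prod n A B + (\<Sum>i<n. A i n * B n i)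
     + (\<Sum>j<n. A n j * B j n) + A n n * B n n"
  unfolding trace_prod_def by (simp add: sum.distrib add.assoc)

lemma psd_fun_Suc_imp_psd_fun:
  assumes "psd_fun (Suc n) A" shows "psd_fun n A"
  unfolding psd_fun_def
proof
  fix v
  have "quad_form n A (\<lambda>k. if k < n then v k else 0) = quad_form n A v"
    by (rule quad_form_cong) auto
  then have "quad_form (Suc n) A (\<lambda>k. if k < n then v k else 0) = quad_form n A v"
    by (simp add: quad_form_Suc)
  then show "Im (quad_form n A v) = 0 \<and> 0 \<le> Re (quad_form n A v)"
    using assms unfolding psd_fun_def by metis
qed

definition schur_compl :: "nat \<Rightarrow> (nat \<Rightarrow> nat \<Rightarrow> complex) \<Rightarrow> nat \<Rightarrow> nat \<Rightarrow> complex" where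
  "schur_compl n A i j = A i j - A i n * A n j / A n n"

lemma psd_fun_schur_compl:
  assumes A: "psd_fun (Suc n) A" and corner: "A n n = complex_of_real \<alpha>" "\<alpha> > 0"
  shows "psd_fun n (schur_compl n A)"
  unfolding psd_fun_def
proof
  fix v
  define \<beta> where "\<beta> = (\<Sum>j<n. A n j * v j)"
  define \<beta>' where "\<beta>' = (\<Sum>i<n. cnj (v i) * A i n)"
  define v' where "v' k = (if k < n then v k else - \<beta> / A n n)" for k
  have "quad_form n (schur_compl n A) v = quad_form n A v
      - (\<Sum>i<n. \<Sum>j<n. cnj (v i) * A i n * (A n j * v j) / A n n)"
    unfolding quad_form_def schur_compl_def by (simp add: sum_subtractf[symmetric] algebra_simps)
  also have "(\<Sum>i<n. \<Sum>j<n. cnj (v i) * A i n * (A n j * v j) / A n n) = \<beta>' * \<beta> / A n n"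
    unfolding \<beta>_def \<beta>'_def sum_distrib_left sum_distrib_right sum_divide_distrib
    by (subst sum.swap) (simp add: algebra_simps)
  finally have schur: "quad_form n (schur_compl n A) v = quad_form n A v - \<beta>' * \<beta> / A n n" .
  have "quad_form n A v' = quad_form n A v" by (rule quad_form_cong) (auto simp: v'_def)
  moreover have "(\<Sum>i<n. cnj (v' i) * A i n * v' n) = \<beta>' * v' n"
    by (simp add: \<beta>'_def v'_def sum_distrib_right sum_divide_distrib sum_negf)
  moreover have "(\<Sum>j<n. cnj (v' n) * A n j * v' j) = cnj (v' n) * \<beta>"
    by (simp add: \<beta>_def v'_def sum_distrib_left mult.assoc)
  ultimately have "quad_form (Suc n) A v' = quad_form n (schur_compl n A) v"
    unfolding quad_form_Suc schur using corner by (simp add: v'_def field_simps)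
  then show "Im (quad_form n (schur_compl n A) v) = 0 \<and> 0 \<le> Re (quad_form n (schur_compl n A) v)"
    using A unfolding psd_fun_def by metis
qed

lemma trace_prod_Suc_schur_compl:
  assumes A: "psd_fun (Suc n) A" and corner: "A n n = complex_of_real \<alpha>" "\<alpha> \<noteq> 0"
  shows "trace_prod (Suc n) A B = trace_prod n (schur_compl n A) B
     + quad_form (Suc n) B (\<lambda>k. if k < n then A k n else A n n) / A n n"
proof -
  define w where "w k = (if k < n then A k n else complex_of_real \<alpha>)" for k
  have herm: "A n i = cnj (A i n)" if "i < n" for i
    by (rule psd_fun_hermitian[OF A]) (use that in auto)
  have "quad_form n B w = (\<Sum>i<n. \<Sum>j<n. A n i * B i j * A j n)"
    unfolding quad_form_def w_def by (intro sum.cong refl) (simp add: herm)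
  moreover have "(\<Sum>i<n. cnj (w i) * B i n * w n) = complex_of_real \<alpha> * (\<Sum>i<n. A n i * B i n)"
    unfolding w_def by (simp add: sum_distrib_left herm algebra_simps)
  moreover have "(\<Sum>j<n. cnj (w n) * B n j * w j) = complex_of_real \<alpha> * (\<Sum>j<n. B n j * A j n)"
    unfolding w_def by (simp add: sum_distrib_left algebra_simps)
  ultimately have quad: "quad_form (Suc n) B w = (\<Sum>i<n. \<Sum>j<n. A n i * B i j * A j n)
      + complex_of_real \<alpha> * (\<Sum>i<n. A n i * B i n) + complex_of_real \<alpha> * (\<Sum>j<n. B n j * A j n)
      + complex_of_real \<alpha> * complex_of_real \<alpha> * B n n"
    unfolding quad_form_Suc by (simp add: w_def)
  have swap: "(\<Sum>i<n. \<Sum>j<n. A i n * A n j * B j i) = (\<Sum>i<n. \<Sum>j<n. A n i * B i j * A j n)"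
    by (subst sum.swap) (simp add: algebra_simps)
  have schur: "trace_prod n (schur_compl n A) B
      = trace_prod n A B - (\<Sum>i<n. \<Sum>j<n. A i n * A n j * B j i) / complex_of_real \<alpha>"
    unfolding trace_prod_def schur_compl_def corner(1)
    by (simp add: sum_subtractf[symmetric] sum_divide_distrib algebra_simps)
  have w: "(\<lambda>k. if k < n then A k n else A n n) = w" using corner(1) by (auto simp: w_def)
  show ?thesis
    unfolding w trace_prod_Suc quad schur swap using corner by (simp add: field_simps)
qed

lemma quad_form_add_diag:
  "quad_form n (\<lambda>i j. A i j + (if i = j then c else 0)) v
     = quad_form n A v + c * (\<Sum>i<n. cnj (v i) * v i)"
  unfolding quad_form_def
  by (simp add: ring_distribs sum.distrib if_zero_mult sum_distrib_left mult.commute mult.left_commute)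

lemma trace_prod_add_diag:
  "trace_prod n (\<lambda>i j. A i j + (if i = j then c else 0)) B = trace_prod n A B + c * (\<Sum>i<n. B i i)"
  unfolding trace_prod_def by (simp add: ring_distribs sum.distrib if_zero_mult sum_distrib_left)

lemma psd_fun_add_diag:
  assumes A: "psd_fun n A" and "\<epsilon> \<ge> 0"
  shows "psd_fun n (\<lambda>i j. A i j + (if i = j then complex_of_real \<epsilon> else 0))"
  unfolding psd_fun_def
proof
  fix v
  have "(\<Sum>i<n. cnj (v i) * v i) = complex_of_real (\<Sum>i<n. (cmod (v i))\<^sup>2)"
    using cnj_mult_of_real_mult[of _ 1] by simp
  moreover have "\<epsilon> * (\<Sum>i<n. (cmod (v i))\<^sup>2) \<ge> 0" using assms(2) by (simp add: sum_nonneg)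
  ultimately show "Im (quad_form n (\<lambda>i j. A i j + (if i = j then complex_of_real \<epsilon> else 0)) v) = 0 \<and>
      0 \<le> Re (quad_form n (\<lambda>i j. A i j + (if i = j then complex_of_real \<epsilon> else 0)) v)"
    using A unfolding psd_fun_def quad_form_add_diag by simp
qed

lemma trace_prod_nonneg:
  "psd_fun n A \<Longrightarrow> psd_fun n B \<Longrightarrow> Im (trace_prod n A B) = 0 \<and> Re (trace_prod n A B) \<ge> 0"
proof (induction n arbitrary: A B)
  case 0 then show ?case by (simp add: trace_prod_def)
next
  case (Suc n)
  let ?t = "\<Sum>i<Suc n. B i i"
  have t: "Im ?t = 0" "Re ?t \<ge> 0"
    using psd_fun_diag[OF Suc.prems(2)] unfolding Im_sum Re_sum
    by (auto intro!: sum_nonneg sum.neutral simp del: sum.lessThan_Suc)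
  have A_corner: "Im (A n n) = 0" "Re (A n n) \<ge> 0" using psd_fun_diag[OF Suc.prems(1)] by auto
  \<comment> \<open>Shifting A by \<epsilon> I makes its last diagonal entry positive, so a Schur complement exists.\<close>
  have regularised: "Im (trace_prod (Suc n) A B + complex_of_real \<epsilon> * ?t) = 0 \<and>
      Re (trace_prod (Suc n) A B + complex_of_real \<epsilon> * ?t) \<ge> 0" if "\<epsilon> > 0" for \<epsilon>
  proof -
    define A' where "A' = (\<lambda>i j. A i j + (if i = j then complex_of_real \<epsilon> else 0))"
    let ?w = "\<lambda>k. if k < n then A' k n else A' n n"
    have A': "psd_fun (Suc n) A'" unfolding A'_def using Suc.prems(1) that by (simp add: psd_fun_add_diag)
    let ?c = "Re (A n n) + \<epsilon>"
    have corner: "A' n n = complex_of_real ?c" "?c > 0"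
      using A_corner that by (simp_all add: A'_def complex_eq_iff)
    have "trace_prod (Suc n) A B + complex_of_real \<epsilon> * ?t = trace_prod (Suc n) A' B"
      unfolding A'_def by (rule trace_prod_add_diag[symmetric])
    also have "\<dots> = trace_prod n (schur_compl n A') B + quad_form (Suc n) B ?w / complex_of_real ?c"
      using trace_prod_Suc_schur_compl[OF A' corner(1)] corner by simp
    also have "quad_form (Suc n) B ?w / complex_of_real ?c = complex_of_real (Re (quad_form (Suc n) B ?w) / ?c)"
      using Suc.prems(2) unfolding psd_fun_def by (simp add: complex_eq_iff)
    finally show ?thesis
      using Suc.IH[OF psd_fun_schur_compl[OF A' corner] psd_fun_Suc_imp_psd_fun[OF Suc.prems(2)]]
        Suc.prems(2) corner(2) unfolding psd_fun_def by simp
  qed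
  have "0 \<le> Re (trace_prod (Suc n) A B) + e" if "e > 0" for e
  proof -
    have "Re (trace_prod (Suc n) A B) \<ge> - (e / (Re ?t + 1)) * Re ?t"
      using regularised[of "e / (Re ?t + 1)"] t that by simp
    moreover have "(e / (Re ?t + 1)) * Re ?t \<le> e"
      using t(2) that by (simp add: field_simps)
    ultimately show ?thesis by linarith
  qed
  then have "0 \<le> Re (trace_prod (Suc n) A B)" by (rule field_le_epsilon)
  with regularised[of 1] t show ?case by simp
qed

section \<open>Pauli measurements on two qubits\<close>

lemma sum_lessThan_2: "(\<Sum>i<2. f i) = f 0 + f (1::nat)"
  by (simp add: numeral_eq_Suc)

lemma sum_lessThan_4: "(\<Sum>i<4. f i) = f 0 + f 1 + f 2 + f (3::nat)"
  by (simp add: numeral_eq_Suc)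

definition pauli_entry :: "nat \<Rightarrow> nat \<Rightarrow> nat \<Rightarrow> complex" where
  "pauli_entry x i j = (if i = j then 0 else if x = 0 then 1 else if i = 0 then - \<i> else \<i>)"

lemma obs_carrier: "obs x \<in> carrier_mat 2 2"
  unfolding obs_def sigma_x_def sigma_y_def mat_of_rows_list_def carrier_mat_def by simp

lemma obs_index:
  assumes "i < 2" "j < 2" shows "obs x $$ (i, j) = pauli_entry x i j"
proof -
  have "i = 0 \<or> i = 1" "j = 0 \<or> j = 1" using assms by auto
  then have "sigma_x $$ (i, j) = pauli_entry 0 i j" "sigma_y $$ (i, j) = pauli_entry 1 i j"
    unfolding sigma_x_def sigma_y_def mat_of_rows_list_def pauli_entry_def by auto
  moreover have "x \<noteq> 0 \<Longrightarrow> pauli_entry x i j = pauli_entry 1 i j" by (simp add: pauli_entry_def)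
  ultimately show ?thesis unfolding obs_def by auto
qed

lemma MB_eq_MA: "MB = MA"
  by (simp add: fun_eq_iff MA_def MB_def)

lemma MA_carrier: "MA a x \<in> carrier_mat 2 2"
  using obs_carrier by (simp add: MA_def proj_def)

lemma MA_index:
  assumes "i < 2" "j < 2"
  shows "MA a x $$ (i, j) = ((if i = j then 1 else 0) + (-1) ^ a * pauli_entry x i j) / 2"
  using assms carrier_matD[OF obs_carrier[of x]] by (simp add: MA_def proj_def obs_index)

lemma mtrace_MA_diff:
  assumes "\<rho> \<in> carrier_mat 2 2"
  shows "mtrace (MA 0 0 * \<rho>) - mtrace (MA 1 0 * \<rho>) = \<rho> $$ (0, 1) + \<rho> $$ (1, 0)"
    and "mtrace (MA 0 1 * \<rho>) - mtrace (MA 1 1 * \<rho>) = \<i> * (\<rho> $$ (0, 1) - \<rho> $$ (1, 0))"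
  using assms
  by (simp_all add: mtrace_mult[OF MA_carrier] MA_index sum_lessThan_2 pauli_entry_def algebra_simps)

definition prob_AB :: "complex mat \<Rightarrow> nat \<Rightarrow> nat \<Rightarrow> nat \<Rightarrow> nat \<Rightarrow> complex" where
  "prob_AB R a b x y = mtrace (kron (MA a x) (MB b y) * R)"

lemma prob_AB_expand:
  assumes "R \<in> carrier_mat 4 4"
  shows "prob_AB R a b x y = (\<Sum>i<4. \<Sum>j<4.
     ((if i div 2 = j div 2 then 1 else 0) + (-1) ^ a * pauli_entry x (i div 2) (j div 2)) / 2 *
     (((if i mod 2 = j mod 2 then 1 else 0) + (-1) ^ b * pauli_entry y (i mod 2) (j mod 2)) / 2) * R $$ (j, i))"
proof -
  have K: "kron (MA a x) (MA b y) \<in> carrier_mat 4 4"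
    using kron_carrier[OF MA_carrier MA_carrier] by simp
  show ?thesis unfolding prob_AB_def MB_eq_MA mtrace_mult[OF K assms]
  proof (intro sum.cong refl)
    fix i j assume "i \<in> {..<4::nat}" "j \<in> {..<4::nat}"
    then have ij: "i < 2 * 2" "j < 2 * 2" by auto
    then have "i div 2 < 2" "j div 2 < 2" "i mod 2 < 2" "j mod 2 < 2" by auto
    then show "kron (MA a x) (MA b y) $$ (i, j) * R $$ (j, i) =
     ((if i div 2 = j div 2 then 1 else 0) + (-1) ^ a * pauli_entry x (i div 2) (j div 2)) / 2 *
     (((if i mod 2 = j mod 2 then 1 else 0) + (-1) ^ b * pauli_entry y (i mod 2) (j mod 2)) / 2) * R $$ (j, i)"
      by (simp only: kron_index[OF MA_carrier MA_carrier ij] MA_index)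
  qed
qed

definition correlator :: "(nat \<Rightarrow> nat \<Rightarrow> nat \<Rightarrow> nat \<Rightarrow> complex) \<Rightarrow> nat \<Rightarrow> nat \<Rightarrow> complex" where
  "correlator p x y = p 0 0 x y - p 0 1 x y - p 1 0 x y + p 1 1 x y"

lemma correlator_prob_AB:
  assumes "R \<in> carrier_mat 4 4"
  shows "correlator (prob_AB R) x y = (\<Sum>i<4. \<Sum>j<4.
    pauli_entry x (i div 2) (j div 2) * pauli_entry y (i mod 2) (j mod 2) * R $$ (j, i))"
proof -
  have ring: "(d1 + o1) / 2 * ((d2 + o2) / 2) * r - (d1 + o1) / 2 * ((d2 - o2) / 2) * r
     - (d1 - o1) / 2 * ((d2 + o2) / 2) * r + (d1 - o1) / 2 * ((d2 - o2) / 2) * r = o1 * o2 * r"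
    for d1 o1 d2 o2 r :: complex
    by (simp add: field_simps)
  show ?thesis
    unfolding correlator_def prob_AB_expand[OF assms]
    by (simp only: sum_subtractf[symmetric] sum.distrib[symmetric])
      (intro sum.cong refl, simp only: power_0 power_one_right mult_1 mult_minus1
        diff_conv_add_uminus[symmetric] ring)
qed

lemma correlator_prob_AB_anti_diagonal:
  assumes "R \<in> carrier_mat 4 4"
  shows "correlator (prob_AB R) 0 0 = R $$ (3, 0) + R $$ (2, 1) + R $$ (1, 2) + R $$ (0, 3)"
    and "correlator (prob_AB R) 1 1 = - R $$ (3, 0) + R $$ (2, 1) + R $$ (1, 2) - R $$ (0, 3)"
    and "correlator (prob_AB R) 0 1 = - \<i> * R $$ (3, 0) + \<i> * R $$ (2, 1) - \<i> * R $$ (1, 2) + \<i> * R $$ (0, 3)"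
    and "correlator (prob_AB R) 1 0 = - \<i> * R $$ (3, 0) - \<i> * R $$ (2, 1) + \<i> * R $$ (1, 2) + \<i> * R $$ (0, 3)"
  unfolding correlator_prob_AB[OF assms] by (simp_all add: sum_lessThan_4 pauli_entry_def)

section \<open>The Mermin functional\<close>

definition correlator3 :: "behaviour \<Rightarrow> nat \<Rightarrow> nat \<Rightarrow> nat \<Rightarrow> real" where
  "correlator3 P x y z = P 0 0 0 x y z - P 0 0 1 x y z - P 0 1 0 x y z + P 0 1 1 x y z
     - P 1 0 0 x y z + P 1 0 1 x y z + P 1 1 0 x y z - P 1 1 1 x y z"

definition mermin_functional :: "behaviour \<Rightarrow> real" where
  "mermin_functional P =
     correlator3 P 0 0 1 + correlator3 P 0 1 0 + correlator3 P 1 0 0 - correlator3 P 1 1 1"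

lemma mermin_functional_mermin: "mermin_functional (mermin V) = 4 * V"
  by (simp add: mermin_functional_def correlator3_def mermin_def field_simps)

definition mermin_term :: "(nat \<Rightarrow> nat \<Rightarrow> complex) \<Rightarrow> (nat \<Rightarrow> nat \<Rightarrow> nat \<Rightarrow> nat \<Rightarrow> complex) \<Rightarrow> complex" where
  "mermin_term q p = (q 0 1 - q 1 1) * (correlator p 0 0 - correlator p 1 1)
     + (q 0 0 - q 1 0) * (correlator p 0 1 + correlator p 1 0)"

lemma mermin_functional_le_of_decomposition:
  assumes r_nonneg: "\<forall>l<n. r l \<ge> 0" and r_sum: "(\<Sum>l<n. r l) = 1"
    and P: "\<forall>a\<in>bit. \<forall>b\<in>bit. \<forall>c\<in>bit. \<forall>x\<in>bit. \<forall>y\<in>bit. \<forall>z\<in>bit.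
      complex_of_real (P a b c x y z) = (\<Sum>l<n. complex_of_real (r l) * p l a b x y * q l c z)"
    and local_bound: "\<And>l. l < n \<Longrightarrow> Re (mermin_term (q l) (p l)) \<le> 2 * sqrt 2"
  shows "mermin_functional P \<le> 2 * sqrt 2"
proof -
  have P': "\<And>a b c x y z. a \<in> bit \<Longrightarrow> b \<in> bit \<Longrightarrow> c \<in> bit \<Longrightarrow> x \<in> bit \<Longrightarrow> y \<in> bit \<Longrightarrow> z \<in> bit \<Longrightarrow>
     complex_of_real (P a b c x y z) = (\<Sum>l<n. complex_of_real (r l) * p l a b x y * q l c z)"
    using P by blast
  have "complex_of_real (mermin_functional P)
      = (\<Sum>l<n. complex_of_real (r l) * mermin_term (q l) (p l))"
    unfolding mermin_functional_def correlator3_def of_real_add of_real_diff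
    by (simp only: P' insert_iff singleton_iff simp_thms sum_subtractf[symmetric] sum.distrib[symmetric])
      (intro sum.cong refl, simp add: mermin_term_def correlator_def algebra_simps)
  then have "mermin_functional P = Re (\<Sum>l<n. complex_of_real (r l) * mermin_term (q l) (p l))"
    by (metis Re_complex_of_real)
  also have "\<dots> = (\<Sum>l<n. r l * Re (mermin_term (q l) (p l)))" by (simp add: Re_sum)
  also have "\<dots> \<le> (\<Sum>l<n. r l * (2 * sqrt 2))"
    using r_nonneg local_bound by (intro sum_mono mult_left_mono) auto
  also have "\<dots> = 2 * sqrt 2" using r_sum by (simp flip: sum_distrib_right)
  finally show ?thesis .
qed

lemma povm_bias_real_bounded:
  assumes N0: "psd d N0" and N1: "psd d N1" and N: "N0 + N1 = 1\<^sub>m d" and \<rho>: "density d \<rho>"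
  shows "\<exists>g. mtrace (N0 * \<rho>) - mtrace (N1 * \<rho>) = complex_of_real g \<and> \<bar>g\<bar> \<le> 1"
proof -
  have carrier: "N0 \<in> carrier_mat d d" "N1 \<in> carrier_mat d d" "\<rho> \<in> carrier_mat d d"
    using N0 N1 \<rho> by (auto simp: psd_def density_def)
  have nonneg: "Im (mtrace (Nc * \<rho>)) = 0 \<and> Re (mtrace (Nc * \<rho>)) \<ge> 0" if "psd d Nc" for Nc
  proof -
    have "mtrace (Nc * \<rho>) = trace_prod d (\<lambda>i j. Nc $$ (i, j)) (\<lambda>i j. \<rho> $$ (i, j))"
      using that carrier by (simp add: psd_def mtrace_mult trace_prod_def)
    then show ?thesis
      using trace_prod_nonneg that \<rho> by (simp add: psd_iff_psd_fun density_def)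
  qed
  have "mtrace (N0 * \<rho>) + mtrace (N1 * \<rho>) = 1"
    using \<rho> carrier by (simp add: density_def N flip: mtrace_add_mult)
  then show ?thesis
    using nonneg[OF N0] nonneg[OF N1]
    by (intro exI[of _ "Re (mtrace (N0 * \<rho>)) - Re (mtrace (N1 * \<rho>))"]) (auto simp: complex_eq_iff)
qed

lemma density_Re_diag_sum:
  assumes "density n R" shows "(\<Sum>i<n. Re (R $$ (i, i))) = 1"
proof -
  have "R \<in> carrier_mat n n" "mtrace R = 1" using assms by (auto simp: density_def psd_def)
  then show ?thesis by (simp add: mtrace_def carrier_matD flip: Re_sum)
qed

lemma cmod_Complex_le_sqrt2:
  assumes "\<bar>a\<bar> \<le> 1" "\<bar>b\<bar> \<le> 1" shows "cmod (Complex a b) \<le> sqrt 2"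
  using assms abs_square_le_1[of a] abs_square_le_1[of b] by (simp add: cmod_def)

lemma mermin_term_prob_AB_le:
  assumes R: "density 4 R"
    and g: "q 0 0 - q 1 0 = complex_of_real g" "\<bar>g\<bar> \<le> 1"
    and h: "q 0 1 - q 1 1 = complex_of_real h" "\<bar>h\<bar> \<le> 1"
  shows "Re (mermin_term q (prob_AB R)) \<le> 2 * sqrt 2"
proof -
  define w where "w = Complex h g"
  have "R \<in> carrier_mat 4 4" "psd_fun 4 (\<lambda>i j. R $$ (i, j))"
    using R by (simp_all add: density_def psd_iff_psd_fun)
  note R4 = this
  have "mermin_term q (prob_AB R) = 2 * (w * R $$ (0, 3) + cnj w * R $$ (3, 0))"
    unfolding mermin_term_def g h correlator_prob_AB_anti_diagonal[OF R4(1)]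
    by (simp add: w_def Complex_eq algebra_simps)
  moreover have "Re (w * R $$ (0, 3) + cnj w * R $$ (3, 0)) \<le> sqrt 2"
  proof -
    have "Re (w * R $$ (0, 3) + cnj w * R $$ (3, 0)) \<le> cmod w * (Re (R $$ (0, 0)) + Re (R $$ (3, 3)))"
      using psd_fun_cross_bound[OF R4(2), of 0 3 w] by simp
    also have "\<dots> \<le> cmod w * 1"
      using density_Re_diag_sum[OF R] psd_fun_diag[OF R4(2), of 1] psd_fun_diag[OF R4(2), of 2]
      by (intro mult_left_mono) (simp_all add: sum_lessThan_4)
    also have "\<dots> \<le> sqrt 2" unfolding w_def using cmod_Complex_le_sqrt2 g h by simp
    finally show ?thesis .
  qed
  ultimately show ?thesis by simp
qed

lemma mermin_term_product_le:
  assumes A: "density 2 \<rho>A" and B: "density 2 \<rho>B"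
    and g: "q 0 0 - q 1 0 = complex_of_real g" "\<bar>g\<bar> \<le> 1"
    and h: "q 0 1 - q 1 1 = complex_of_real h" "\<bar>h\<bar> \<le> 1"
  shows "Re (mermin_term q (\<lambda>a b x y. mtrace (MA a x * \<rho>A) * mtrace (MA b y * \<rho>B))) \<le> 2 * sqrt 2"
proof -
  define w where "w = Complex h g"
  define u where "u = w * \<rho>A $$ (0, 1) * \<rho>B $$ (0, 1)"
  have "\<rho>A \<in> carrier_mat 2 2" "psd_fun 2 (\<lambda>i j. \<rho>A $$ (i, j))"
    "\<rho>B \<in> carrier_mat 2 2" "psd_fun 2 (\<lambda>i j. \<rho>B $$ (i, j))"
    using A B by (simp_all add: density_def psd_iff_psd_fun)
  note AB = this
  have herm: "\<rho>A $$ (1, 0) = cnj (\<rho>A $$ (0, 1))" "\<rho>B $$ (1, 0) = cnj (\<rho>B $$ (0, 1))"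
    using psd_fun_hermitian[OF AB(2), of 0 1] psd_fun_hermitian[OF AB(4), of 0 1] by simp_all
  have corr: "correlator (\<lambda>a b x y. mtrace (MA a x * \<rho>A) * mtrace (MA b y * \<rho>B)) x y
      = (mtrace (MA 0 x * \<rho>A) - mtrace (MA 1 x * \<rho>A)) * (mtrace (MA 0 y * \<rho>B) - mtrace (MA 1 y * \<rho>B))"
    for x y by (simp add: correlator_def algebra_simps)
  have "mermin_term q (\<lambda>a b x y. mtrace (MA a x * \<rho>A) * mtrace (MA b y * \<rho>B)) = 2 * (u + cnj u)"
    unfolding mermin_term_def corr mtrace_MA_diff[OF AB(1)] mtrace_MA_diff[OF AB(3)] g h herm u_def w_def
    by (simp add: Complex_eq algebra_simps)
  then have "Re (mermin_term q (\<lambda>a b x y. mtrace (MA a x * \<rho>A) * mtrace (MA b y * \<rho>B))) = 4 * Re u"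
    by simp
  moreover have "cmod u \<le> sqrt 2 * (1/2) * (1/2)"
    unfolding u_def norm_mult
    using cmod_Complex_le_sqrt2[OF h(2) g(2)] density_Re_diag_sum[OF A] density_Re_diag_sum[OF B]
      psd_fun_offdiag_le_half[OF AB(2)] psd_fun_offdiag_le_half[OF AB(4)]
    by (intro mult_mono) (auto simp: w_def sum_lessThan_2)
  ultimately show ?thesis using complex_Re_le_cmod[of u] real_sqrt_ge_zero[of 2] by linarith
qed

lemma mermin_functional_le_if_separable:
  assumes "AB_C_separable_model P" shows "mermin_functional P \<le> 2 * sqrt 2"
proof -
  obtain d n :: nat and r :: "nat \<Rightarrow> real" and \<rho>AB \<rho>C :: "nat \<Rightarrow> complex mat"
      and N :: "nat \<Rightarrow> nat \<Rightarrow> complex mat" where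
    r: "\<forall>l<n. r l \<ge> 0" "(\<Sum>l<n. r l) = 1"
    and states: "\<forall>l<n. density 4 (\<rho>AB l) \<and> density d (\<rho>C l)"
    and N: "\<forall>z\<in>bit. psd d (N 0 z) \<and> psd d (N 1 z) \<and> N 0 z + N 1 z = 1\<^sub>m d"
    and P: "\<forall>a\<in>bit. \<forall>b\<in>bit. \<forall>c\<in>bit. \<forall>x\<in>bit. \<forall>y\<in>bit. \<forall>z\<in>bit.
          complex_of_real (P a b c x y z) =
            mtrace (kron (kron (MA a x) (MB b y)) (N c z) *
              msum n (4 * d) (\<lambda>l. complex_of_real (r l) \<cdot>\<^sub>m kron (\<rho>AB l) (\<rho>C l)))"
    using assms unfolding AB_C_separable_model_def Let_def by blast
  have carrier: "\<And>l. l < n \<Longrightarrow> \<rho>AB l \<in> carrier_mat 4 4" "\<And>l. l < n \<Longrightarrow> \<rho>C l \<in> carrier_mat d d"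
    using states by (auto simp: density_def psd_def)
  have "kron (MA a x) (MB b y) \<in> carrier_mat 4 4" for a b x y
    using kron_carrier[OF MA_carrier MA_carrier] by (simp add: MB_eq_MA)
  moreover have "N c z \<in> carrier_mat d d" if "c \<in> bit" "z \<in> bit" for c z
    using N that by (auto simp: psd_def)
  ultimately have decomposition: "\<forall>a\<in>bit. \<forall>b\<in>bit. \<forall>c\<in>bit. \<forall>x\<in>bit. \<forall>y\<in>bit. \<forall>z\<in>bit.
      complex_of_real (P a b c x y z)
        = (\<Sum>l<n. complex_of_real (r l) * prob_AB (\<rho>AB l) a b x y * mtrace (N c z * \<rho>C l))"
    using P by (simp add: mtrace_kron_mult_msum carrier prob_AB_def)
  have "Re (mermin_term (\<lambda>c z. mtrace (N c z * \<rho>C l)) (prob_AB (\<rho>AB l))) \<le> 2 * sqrt 2"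
    if "l < n" for l
  proof -
    have C: "density d (\<rho>C l)" and AB: "density 4 (\<rho>AB l)" using states that by auto
    obtain g where "mtrace (N 0 0 * \<rho>C l) - mtrace (N 1 0 * \<rho>C l) = complex_of_real g" "\<bar>g\<bar> \<le> 1"
      using povm_bias_real_bounded[OF _ _ _ C] N by blast
    moreover obtain h where
      "mtrace (N 0 1 * \<rho>C l) - mtrace (N 1 1 * \<rho>C l) = complex_of_real h" "\<bar>h\<bar> \<le> 1"
      using povm_bias_real_bounded[OF _ _ _ C] N by blast
    ultimately show ?thesis by (rule mermin_term_prob_AB_le[OF AB])
  qed
  then show ?thesis by (rule mermin_functional_le_of_decomposition[OF r decomposition])
qed

lemma mermin_functional_le_if_fully_LHS_LHV:
  assumes "fully_LHS_LHV P" shows "mermin_functional P \<le> 2 * sqrt 2"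
proof -
  obtain n :: nat and q :: "nat \<Rightarrow> real" and \<rho>A \<rho>B :: "nat \<Rightarrow> complex mat"
      and Pc :: "nat \<Rightarrow> nat \<Rightarrow> nat \<Rightarrow> real" where
    q: "\<forall>l<n. q l \<ge> 0" "(\<Sum>l<n. q l) = 1"
    and states: "\<forall>l<n. density 2 (\<rho>A l) \<and> density 2 (\<rho>B l)"
    and Pc: "\<forall>l<n. \<forall>z\<in>bit. Pc l 0 z \<ge> 0 \<and> Pc l 1 z \<ge> 0 \<and> Pc l 0 z + Pc l 1 z = 1"
    and P: "\<forall>a\<in>bit. \<forall>b\<in>bit. \<forall>c\<in>bit. \<forall>x\<in>bit. \<forall>y\<in>bit. \<forall>z\<in>bit.
          complex_of_real (P a b c x y z) =
            (\<Sum>l<n. complex_of_real (q l) * mtrace (MA a x * \<rho>A l)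
                     * mtrace (MB b y * \<rho>B l) * complex_of_real (Pc l c z))"
    using assms unfolding fully_LHS_LHV_def by blast
  have decomposition: "\<forall>a\<in>bit. \<forall>b\<in>bit. \<forall>c\<in>bit. \<forall>x\<in>bit. \<forall>y\<in>bit. \<forall>z\<in>bit.
      complex_of_real (P a b c x y z) = (\<Sum>l<n. complex_of_real (q l)
        * (mtrace (MA a x * \<rho>A l) * mtrace (MA b y * \<rho>B l)) * complex_of_real (Pc l c z))"
    using P by (simp add: MB_eq_MA mult.assoc)
  have "Re (mermin_term (\<lambda>c z. complex_of_real (Pc l c z))
      (\<lambda>a b x y. mtrace (MA a x * \<rho>A l) * mtrace (MA b y * \<rho>B l))) \<le> 2 * sqrt 2"
    if "l < n" for l
    using Pc states that
    by (intro mermin_term_product_le[where g = "Pc l 0 0 - Pc l 1 0" and h = "Pc l 0 1 - Pc l 1 1"]) auto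
  then show ?thesis by (rule mermin_functional_le_of_decomposition[OF q decomposition])
qed

section \<open>A separable model below the threshold\<close>

definition x_state :: "real \<Rightarrow> real \<Rightarrow> complex \<Rightarrow> complex mat" where
  "x_state d0 d1 \<zeta> = mat 4 4 (\<lambda>(i, j).
     if i = j then (if i = 0 \<or> i = 3 then complex_of_real d0 else complex_of_real d1)
     else if i = 3 \<and> j = 0 then \<zeta> else if i = 0 \<and> j = 3 then cnj \<zeta> else 0)"

definition x_state_correlator :: "nat \<Rightarrow> nat \<Rightarrow> complex \<Rightarrow> complex" where
  "x_state_correlator x y \<zeta> =
     (if x = y then (if x = 0 then \<zeta> + cnj \<zeta> else - (\<zeta> + cnj \<zeta>)) else \<i> * (cnj \<zeta> - \<zeta>))"

lemma x_state_carrier: "x_state d0 d1 \<zeta> \<in> carrier_mat 4 4"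
  by (simp add: x_state_def)

lemma bit_cases: "a \<in> bit \<Longrightarrow> a = 0 \<or> a = 1"
  by auto

lemma prob_AB_x_state:
  assumes "a \<in> bit" "b \<in> bit" "x \<in> bit" "y \<in> bit"
  shows "prob_AB (x_state d0 d1 \<zeta>) a b x y
       = (2 * complex_of_real d0 + 2 * complex_of_real d1 + (-1) ^ (a + b) * x_state_correlator x y \<zeta>) / 4"
proof -
  have sum: "(\<Sum>i<4. \<Sum>j<4. f i j * x_state d0 d1 \<zeta> $$ (j, i)) =
     f 0 0 * d0 + f 1 1 * d1 + f 2 2 * d1 + f 3 3 * d0 + f 0 3 * \<zeta> + f 3 0 * cnj \<zeta>" for f
    by (simp add: sum_lessThan_4 x_state_def)
  show ?thesis
    using bit_cases[OF assms(1)] bit_cases[OF assms(2)] bit_cases[OF assms(3)] bit_cases[OF assms(4)]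
    unfolding prob_AB_expand[OF x_state_carrier] sum
    by (elim disjE) (simp_all add: pauli_entry_def x_state_correlator_def field_simps)
qed

lemma psd_fun_x_state:
  assumes d0: "d0 \<ge> 0" and d1: "d1 \<ge> 0" and \<zeta>: "cmod \<zeta> \<le> d0"
  shows "psd_fun 4 (\<lambda>i j. x_state d0 d1 \<zeta> $$ (i, j))"
  unfolding psd_fun_def
proof
  fix v :: "nat \<Rightarrow> complex"
  define u where "u = cnj (v 3) * \<zeta> * v 0"
  let ?a = "cmod (v 0)" and ?b = "cmod (v 3)"
  have "quad_form 4 (\<lambda>i j. x_state d0 d1 \<zeta> $$ (i, j)) v =
      cnj (v 0) * complex_of_real d0 * v 0 + cnj (v 1) * complex_of_real d1 * v 1
    + cnj (v 2) * complex_of_real d1 * v 2 + cnj (v 3) * complex_of_real d0 * v 3 + (cnj u + u)"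
    unfolding quad_form_def u_def by (simp add: sum_lessThan_4 x_state_def algebra_simps)
  also have "\<dots> = complex_of_real (d0 * ?a\<^sup>2 + d1 * (cmod (v 1))\<^sup>2 + d1 * (cmod (v 2))\<^sup>2 + d0 * ?b\<^sup>2
      + 2 * Re u)"
    by (simp add: cnj_mult_of_real_mult complex_eq_iff)
  finally have q: "quad_form 4 (\<lambda>i j. x_state d0 d1 \<zeta> $$ (i, j)) v = \<dots>" .
  \<comment> \<open>The coherence is dominated by the diagonal: -2 Re u \<le> 2 d0 a b \<le> d0 (a^2 + b^2).\<close>
  have "- Re u \<le> cmod \<zeta> * (?a * ?b)"
    using abs_Re_le_cmod[of u] by (simp add: u_def norm_mult algebra_simps)
  also have "\<dots> \<le> d0 * (?a * ?b)" using \<zeta> by (intro mult_right_mono) auto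
  finally have "0 \<le> d0 * ?a\<^sup>2 + d0 * ?b\<^sup>2 + 2 * Re u"
    using mult_left_mono[OF sum_squares_ge_zero[of "?a - ?b" 0] d0]
    by (simp add: power2_eq_square algebra_simps)
  moreover have "0 \<le> d1 * (cmod (v 1))\<^sup>2 + d1 * (cmod (v 2))\<^sup>2" using d1 by simp
  ultimately show "Im (quad_form 4 (\<lambda>i j. x_state d0 d1 \<zeta> $$ (i, j)) v) = 0 \<and>
      0 \<le> Re (quad_form 4 (\<lambda>i j. x_state d0 d1 \<zeta> $$ (i, j)) v)"
    unfolding q by simp
qed

lemma density_x_state:
  assumes "d0 \<ge> 0" "d1 \<ge> 0" "cmod \<zeta> \<le> d0" "2 * d0 + 2 * d1 = 1"
  shows "density 4 (x_state d0 d1 \<zeta>)"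
proof -
  have "mtrace (x_state d0 d1 \<zeta>) = complex_of_real (2 * d0 + 2 * d1)"
    by (simp add: mtrace_def x_state_def sum_lessThan_4)
  then show ?thesis
    using assms psd_fun_x_state[OF assms(1-3)] x_state_carrier by (simp add: density_def psd_iff_psd_fun)
qed

(* The hidden variable l < 4 stores Charlie's answers to z = 0 and z = 1 as its two binary digits. *)
definition hidden_bit :: "nat \<Rightarrow> nat \<Rightarrow> nat" where
  "hidden_bit z l = (if z = 0 then l mod 2 else l div 2)"

definition hidden_sign :: "nat \<Rightarrow> nat \<Rightarrow> real" where
  "hidden_sign z l = (if hidden_bit z l = 0 then 1 else -1)"

definition coherence :: "real \<Rightarrow> nat \<Rightarrow> complex" where
  "coherence V l = complex_of_real V * Complex (hidden_sign 1 l) (hidden_sign 0 l) / 2"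

definition ab_correlation :: "real \<Rightarrow> nat \<Rightarrow> nat \<Rightarrow> nat \<Rightarrow> real" where
  "ab_correlation V l x y =
     (if x = y then (if x = 0 then V * hidden_sign 1 l else - (V * hidden_sign 1 l)) else V * hidden_sign 0 l)"

definition basis_proj :: "nat \<Rightarrow> complex mat" where
  "basis_proj l = mat 4 4 (\<lambda>(i, j). if i = l \<and> j = l then 1 else 0)"

definition charlie_povm :: "nat \<Rightarrow> nat \<Rightarrow> complex mat" where
  "charlie_povm c z = mat 4 4 (\<lambda>(i, j). if i = j \<and> hidden_bit z i = c then 1 else 0)"

lemma x_state_correlator_coherence:
  "x_state_correlator x y (coherence V l) = complex_of_real (ab_correlation V l x y)"
  by (simp add: x_state_correlator_def coherence_def ab_correlation_def complex_eq_iff)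

lemma cmod_coherence: "V \<ge> 0 \<Longrightarrow> cmod (coherence V l) \<le> sqrt 2 * V / 2"
  using cmod_Complex_le_sqrt2[of "hidden_sign 1 l" "hidden_sign 0 l"]
  by (simp add: coherence_def norm_mult norm_divide hidden_sign_def mult.commute mult_left_mono)

lemma lessThan_4_cases: "l < (4::nat) \<Longrightarrow> l = 0 \<or> l = 1 \<or> l = 2 \<or> l = 3"
  by auto

lemma mermin_hidden_average:
  assumes "a \<in> bit" "b \<in> bit" "c \<in> bit" "x \<in> bit" "y \<in> bit" "z \<in> bit"
  shows "mermin V a b c x y z = (\<Sum>l<4. 1/4 * ((1 + (-1) ^ (a + b) * ab_correlation V l x y) / 4)
           * (if hidden_bit z l = c then 1 else 0))"
  using bit_cases[OF assms(1)] bit_cases[OF assms(2)] bit_cases[OF assms(3)]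
    bit_cases[OF assms(4)] bit_cases[OF assms(5)] bit_cases[OF assms(6)]
  by (elim disjE)
    (simp_all add: sum_lessThan_4 mermin_def ab_correlation_def hidden_sign_def hidden_bit_def field_simps)

lemma mtrace_charlie_povm_basis_proj:
  assumes "l < 4"
  shows "mtrace (charlie_povm c z * basis_proj l) = (if hidden_bit z l = c then 1 else 0)"
proof -
  have "mtrace (charlie_povm c z * basis_proj l)
      = (\<Sum>i<4. \<Sum>j<4. charlie_povm c z $$ (i, j) * basis_proj l $$ (j, i))"
    by (rule mtrace_mult) (simp_all add: charlie_povm_def basis_proj_def)
  then show ?thesis
    using lessThan_4_cases[OF assms]
    by (elim disjE) (simp_all add: sum_lessThan_4 charlie_povm_def basis_proj_def)
qed

lemma density_basis_proj:
  assumes "l < 4" shows "density 4 (basis_proj l)"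
proof -
  have "psd_fun 4 (\<lambda>i j. if i = j then complex_of_real (if i = l then 1 else 0) else 0)"
    by (rule psd_fun_diagonal) simp
  then have "psd_fun 4 (\<lambda>i j. basis_proj l $$ (i, j))"
    by (rule psd_fun_cong[rotated]) (auto simp: basis_proj_def)
  moreover have "mtrace (basis_proj l) = 1"
    using lessThan_4_cases[OF assms] by (elim disjE) (simp_all add: mtrace_def basis_proj_def sum_lessThan_4)
  ultimately show ?thesis by (simp add: density_def psd_iff_psd_fun basis_proj_def)
qed

lemma psd_charlie_povm: "psd 4 (charlie_povm c z)"
proof -
  have "psd_fun 4 (\<lambda>i j. if i = j then complex_of_real (if hidden_bit z i = c then 1 else 0) else 0)"
    by (rule psd_fun_diagonal) simp
  then have "psd_fun 4 (\<lambda>i j. charlie_povm c z $$ (i, j))"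
    by (rule psd_fun_cong[rotated]) (auto simp: charlie_povm_def)
  then show ?thesis by (simp add: psd_iff_psd_fun charlie_povm_def)
qed

lemma charlie_povm_sum: "charlie_povm 0 z + charlie_povm 1 z = 1\<^sub>m 4"
proof (rule eq_matI)
  fix i j assume "i < dim_row (1\<^sub>m 4 :: complex mat)" "j < dim_col (1\<^sub>m 4 :: complex mat)"
  moreover have "hidden_bit z i = 0 \<or> hidden_bit z i = 1" if "i < 4" using that by (auto simp: hidden_bit_def)
  ultimately show "(charlie_povm 0 z + charlie_povm 1 z) $$ (i, j) = 1\<^sub>m 4 $$ (i, j)"
    by (auto simp: charlie_povm_def)
qed (simp_all add: charlie_povm_def)

lemma mermin_eq_mtrace_hidden_model:
  assumes "2 * d0 + 2 * d1 = 1"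
    and "a \<in> bit" "b \<in> bit" "c \<in> bit" "x \<in> bit" "y \<in> bit" "z \<in> bit"
  shows "complex_of_real (mermin V a b c x y z) =
     mtrace (kron (kron (MA a x) (MB b y)) (charlie_povm c z) *
       msum 4 (4 * 4) (\<lambda>l. complex_of_real (1/4) \<cdot>\<^sub>m kron (x_state d0 d1 (coherence V l)) (basis_proj l)))"
proof -
  have K: "kron (MA a x) (MB b y) \<in> carrier_mat 4 4"
    using kron_carrier[OF MA_carrier MA_carrier] by (simp add: MB_eq_MA)
  have d: "2 * complex_of_real d0 + 2 * complex_of_real d1 = 1"
    using arg_cong[OF assms(1), of complex_of_real] by simp
  have "mtrace (kron (kron (MA a x) (MB b y)) (charlie_povm c z) *
       msum 4 (4 * 4) (\<lambda>l. complex_of_real (1/4) \<cdot>\<^sub>m kron (x_state d0 d1 (coherence V l)) (basis_proj l)))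
      = (\<Sum>l<4. complex_of_real (1/4) * prob_AB (x_state d0 d1 (coherence V l)) a b x y
          * mtrace (charlie_povm c z * basis_proj l))"
    by (rule mtrace_kron_mult_msum[OF K _ x_state_carrier, folded prob_AB_def])
      (simp_all add: charlie_povm_def basis_proj_def)
  also have "\<dots> = (\<Sum>l<4. complex_of_real (1/4 * ((1 + (-1) ^ (a + b) * ab_correlation V l x y) / 4)
      * (if hidden_bit z l = c then 1 else 0)))"
  proof (rule sum.cong[OF refl])
    fix l :: nat assume "l \<in> {..<4}"
    then show "complex_of_real (1/4) * prob_AB (x_state d0 d1 (coherence V l)) a b x y
          * mtrace (charlie_povm c z * basis_proj l)
        = complex_of_real (1/4 * ((1 + (-1) ^ (a + b) * ab_correlation V l x y) / 4)
          * (if hidden_bit z l = c then 1 else 0))"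
      using assms(2-7) d
      by (cases "hidden_bit z l = c")
        (simp_all add: prob_AB_x_state x_state_correlator_coherence mtrace_charlie_povm_basis_proj)
  qed
  finally show ?thesis using mermin_hidden_average[OF assms(2-7)] by (simp only: of_real_sum)
qed

lemma separable_model_mermin:
  assumes "0 \<le> V" "V \<le> 1 / sqrt 2"
  shows "AB_C_separable_model (mermin V)"
proof -
  \<comment> \<open>The X-state needs d1 \<ge> 0 and cmod (coherence V l) \<le> d0, i.e. exactly V \<le> 1 / sqrt 2.\<close>
  define d0 where "d0 = (1 + sqrt 2 * V) / 4"
  define d1 where "d1 = (1 - sqrt 2 * V) / 4"
  have d: "2 * d0 + 2 * d1 = 1" by (simp add: d0_def d1_def field_simps)
  have "sqrt 2 * V \<le> 1" using assms(2) by (simp add: field_simps)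
  then have "density 4 (x_state d0 d1 (coherence V l))" for l
    using assms(1) cmod_coherence[OF assms(1), of l] d
    by (intro density_x_state) (simp_all add: d0_def d1_def)
  with d show ?thesis
    unfolding AB_C_separable_model_def Let_def
    using density_basis_proj psd_charlie_povm charlie_povm_sum mermin_eq_mtrace_hidden_model
    by (intro exI[of _ 4] exI[of _ "\<lambda>_. 1/4"] exI[of _ "\<lambda>l. x_state d0 d1 (coherence V l)"]
        exI[of _ basis_proj] exI[of _ charlie_povm]) (simp add: sum_lessThan_4)
qed

theorem proposition6:
  fixes V :: real
  assumes "0 < V" and "V \<le> 1"
  shows "tripartite_steering (mermin V) \<longleftrightarrow> V > 1 / sqrt 2"
proof -
  have "V > 1 / sqrt 2 \<longleftrightarrow> V * sqrt 2 > 1" by (simp add: divide_less_eq)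
  also have "\<dots> \<longleftrightarrow> V * sqrt 2 * sqrt 2 > sqrt 2" by simp
  also have "\<dots> \<longleftrightarrow> 4 * V > 2 * sqrt 2"
    unfolding mult.assoc real_sqrt_mult_self by arith
  finally have threshold: "V > 1 / sqrt 2 \<longleftrightarrow> 4 * V > 2 * sqrt 2" .
  show ?thesis
  proof
    assume "tripartite_steering (mermin V)"
    then have "\<not> AB_C_separable_model (mermin V)" by (simp add: tripartite_steering_def)
    then show "V > 1 / sqrt 2" using separable_model_mermin[of V] assms(1) by linarith
  next
    assume "V > 1 / sqrt 2"
    then have "\<not> mermin_functional (mermin V) \<le> 2 * sqrt 2"
      using threshold by (simp add: mermin_functional_mermin)
    then show "tripartite_steering (mermin V)"
      unfolding tripartite_steering_def
      using mermin_functional_le_if_separable mermin_functional_le_if_fully_LHS_LHV by blast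
  qed
qed

end
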